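(* Let $i,j,k$ be distinct jobs such that $(i,k)$ and $(j,k)$ are red pairs. Then $D^*(i,j)\ge t_k$ and, in the schedule produced by $1$-SORT, $D(i,j)\le\left(1+\frac{1}{\mu\nu}\right)D^*(i,j)$.
   Context: Setting: single machine, jobs $J=\{1,\dots,n\}$, each job $j$ with test time $t_j\ge0$ and processing time $p_j\ge0$ (revealed only when the test is executed); each job's test must be executed before its processing part, which may start any time after the test; operations are non-preemptive and the machine does one at a time. $\sigma_j=t_j+p_j$, $m_j=\max\{t_j,p_j\}$. Standing assumption (general position): no two of the $3n$ numbers $t_j,p_j,\sigma_j$ are equal. Algorithm $1$-SORT: keep a priority queue of available operations, initially the test of every job $j$ with priority $t_j$; repeatedly remove a minimum-priority operation and execute it immediately; after executing the test of $j$, insert the processing part of $j$ with priority $p_j$. For distinct jobs $j,k$, let $d_{k,j}$ be the total amount of time during which operations of $k$ are executed before the completion time of $j$, and $D(j,k)=d_{j,k}+d_{k,j}$, evaluated for the $1$-SORT schedule; $D^*(j,k)=\min\{\sigma_j,\sigma_k\}$. Fix constants $\mu>1$ and $0<\nu<1$ with $\mu\nu>1$ and $1+\frac1\mu\le\nu+\nu^2$. A job $j$ is imbalanced if $m_j\ge\mu\min\{t_j,p_j\}$. For distinct jobs $j,k$, the ordered pair $(j,k)$ is a red pair if $j$ is imbalanced, $m_j\ge t_k\ge\nu m_j$, and $p_k\ge\nu t_k$. *)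

theory Defs
  imports Complex_Main
begin

datatype 'a operation = Test 'a | Proc 'a

fun op_job :: "'a operation \<Rightarrow> 'a" where
  "op_job (Test j) = j" | "op_job (Proc j) = j"

text \<open>Length of an operation (also its priority in 1-SORT).\<close>
fun op_len :: "('a \<Rightarrow> real) \<Rightarrow> ('a \<Rightarrow> real) \<Rightarrow> 'a operation \<Rightarrow> real" where
  "op_len t p (Test j) = t j" | "op_len t p (Proc j) = p j"

definition sigma :: "('a \<Rightarrow> real) \<Rightarrow> ('a \<Rightarrow> real) \<Rightarrow> 'a \<Rightarrow> real" where
  "sigma t p j = t j + p j"

definition mval :: "('a \<Rightarrow> real) \<Rightarrow> ('a \<Rightarrow> real) \<Rightarrow> 'a \<Rightarrow> real" where
  "mval t p j = max (t j) (p j)"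

text \<open>General position: the 3n numbers t_j, p_j, sigma_j (j in J) are pairwise distinct.\<close>
definition general_position :: "'a set \<Rightarrow> ('a \<Rightarrow> real) \<Rightarrow> ('a \<Rightarrow> real) \<Rightarrow> bool" where
  "general_position J t p \<longleftrightarrow>
     inj_on (\<lambda>(c::nat, j). if c = 0 then t j else if c = 1 then p j else sigma t p j)
            ({0, 1, 2} \<times> J)"

definition sort_step :: "('a \<Rightarrow> real) \<Rightarrow> ('a \<Rightarrow> real) \<Rightarrow>
    'a operation set \<times> 'a operation list \<Rightarrow> 'a operation set \<times> 'a operation list" where
  "sort_step t p st =
     (let Q = fst st; S = snd st; x0 = arg_min (op_len t p) (\<lambda>x. x \<in> Q) in
      ((Q - {x0}) \<union> (case x0 of Test j \<Rightarrow> {Proc j} | Proc j \<Rightarrow> {}), S @ [x0]))"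

text \<open>The sequence of operations executed by 1-SORT (all 2n operations; executed
  back to back without idle time since every operation is executed immediately).\<close>
definition one_sort :: "'a set \<Rightarrow> ('a \<Rightarrow> real) \<Rightarrow> ('a \<Rightarrow> real) \<Rightarrow> 'a operation list" where
  "one_sort J t p = snd ((sort_step t p ^^ (2 * card J)) (Test ` J, []))"

text \<open>d_{k,j}: total time during which operations of k are executed before the completion
  time of j, i.e. before the end of the processing part of j (the operations preceding
  Proc j in the schedule, plus Proc j itself, which belongs to j and not to k).\<close>
definition dd :: "'a set \<Rightarrow> ('a \<Rightarrow> real) \<Rightarrow> ('a \<Rightarrow> real) \<Rightarrow> 'a \<Rightarrow> 'a \<Rightarrow> real" where
  "dd J t p k j = sum_list (map (op_len t p)
      (filter (\<lambda>x. op_job x = k) (takeWhile (\<lambda>x. x \<noteq> Proc j) (one_sort J t p))))"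

definition DD :: "'a set \<Rightarrow> ('a \<Rightarrow> real) \<Rightarrow> ('a \<Rightarrow> real) \<Rightarrow> 'a \<Rightarrow> 'a \<Rightarrow> real" where
  "DD J t p j k = dd J t p j k + dd J t p k j"

definition Dstar :: "('a \<Rightarrow> real) \<Rightarrow> ('a \<Rightarrow> real) \<Rightarrow> 'a \<Rightarrow> 'a \<Rightarrow> real" where
  "Dstar t p j k = min (sigma t p j) (sigma t p k)"

definition imbalanced :: "real \<Rightarrow> ('a \<Rightarrow> real) \<Rightarrow> ('a \<Rightarrow> real) \<Rightarrow> 'a \<Rightarrow> bool" where
  "imbalanced \<mu> t p j \<longleftrightarrow> mval t p j \<ge> \<mu> * min (t j) (p j)"

definition red_pair :: "real \<Rightarrow> real \<Rightarrow> ('a \<Rightarrow> real) \<Rightarrow> ('a \<Rightarrow> real) \<Rightarrow> 'a \<Rightarrow> 'a \<Rightarrow> bool" where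
  "red_pair \<mu> \<nu> t p j k \<longleftrightarrow> j \<noteq> k \<and> imbalanced \<mu> t p j \<and>
     mval t p j \<ge> t k \<and> t k \<ge> \<nu> * mval t p j \<and> p k \<ge> \<nu> * t k"

end

theory Submission
  imports Defs
begin

text \<open>1-SORT executes the operations in nondecreasing order of the key \<open>t\<^sub>l\<close> for the test
  and \<open>m\<^sub>l = max t\<^sub>l p\<^sub>l\<close> for the processing part of a job \<open>l\<close> (the processing part
  cannot run before its own test). Hence if \<open>m\<^sub>i < m\<^sub>j\<close>, nothing of \<open>j\<close> except possibly its
  test, and that only when \<open>t\<^sub>j < m\<^sub>i\<close>, runs before \<open>i\<close> completes, and
  \<open>D(i,j) \<le> \<sigma>\<^sub>i + [t\<^sub>j < m\<^sub>i] t\<^sub>j\<close>.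
  Imbalance gives \<open>\<sigma>\<^sub>i \<le> (1 + 1/\<mu>) m\<^sub>i\<close> and, when \<open>t\<^sub>j < m\<^sub>i\<close>, \<open>t\<^sub>j \<le> p\<^sub>j/\<mu>\<close>;
  the two red pairs give \<open>\<nu> m\<^sub>j \<le> t\<^sub>k \<le> m\<^sub>i\<close>, so \<open>t\<^sub>j \<le> m\<^sub>i/(\<mu>\<nu>)\<close>, and both
  \<open>D\<^sup>*(i,j) \<ge> t\<^sub>k\<close> and the ratio bound follow by comparing with \<open>\<sigma>\<^sub>i\<close> and \<open>\<sigma>\<^sub>j\<close>.\<close>

definition sort_key :: "('a \<Rightarrow> real) \<Rightarrow> ('a \<Rightarrow> real) \<Rightarrow> 'a operation \<Rightarrow> real" where
  "sort_key t p x = (case x of Test j \<Rightarrow> t j | Proc j \<Rightarrow> mval t p j)"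

definition pending :: "'a operation set \<Rightarrow> 'a operation set" where
  "pending Q = Q \<union> {Proc l | l. Test l \<in> Q}"

definition sort_invariant :: "'a set \<Rightarrow> ('a \<Rightarrow> real) \<Rightarrow> ('a \<Rightarrow> real) \<Rightarrow>
    'a operation set \<Rightarrow> 'a operation list \<Rightarrow> bool" where
  "sort_invariant J t p Q S \<longleftrightarrow>
     finite Q \<and> set S \<union> pending Q = Test ` J \<union> Proc ` J \<and> set S \<inter> pending Q = {} \<and>
     distinct S \<and> sorted_wrt (\<lambda>x y. sort_key t p x \<le> sort_key t p y) S \<and>
     (\<forall>x\<in>set S. \<forall>y\<in>pending Q. sort_key t p x \<le> sort_key t p y) \<and>
     (\<forall>l. Proc l \<in> Q \<longrightarrow> Test l \<in> set S)"

lemma op_len_le_sort_key: "op_len t p x \<le> sort_key t p x"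
  by (cases x) (auto simp: sort_key_def mval_def)

lemma pending_sort_step:
  assumes "sort_invariant J t p Q S" and "x \<in> Q"
  shows "pending ((Q - {x}) \<union> (case x of Test j \<Rightarrow> {Proc j} | Proc j \<Rightarrow> {})) = pending Q - {x}"
proof (cases x)
  case (Test j)
  then show ?thesis using assms(2) unfolding pending_def by auto
next
  case (Proc j)
  then have "Test j \<notin> Q"
    using assms unfolding sort_invariant_def pending_def by blast
  then show ?thesis using Proc unfolding pending_def by auto
qed

lemma sort_key_least_pending:
  assumes inv: "sort_invariant J t p Q S" and "x \<in> Q" and least: "\<forall>y\<in>Q. op_len t p x \<le> op_len t p y"
    and "y \<in> pending Q"
  shows "sort_key t p x \<le> sort_key t p y"
proof -
  have len_le: "op_len t p x \<le> sort_key t p y"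
  proof -
    consider "y \<in> Q" | l where "y = Proc l" "Test l \<in> Q"
      using \<open>y \<in> pending Q\<close> unfolding pending_def by auto
    then show ?thesis
    proof cases
      case 1
      then show ?thesis using least op_len_le_sort_key[of t p y] by force
    next
      case 2
      then show ?thesis using least by (force simp: sort_key_def mval_def)
    qed
  qed
  show ?thesis
  proof (cases x)
    case (Test j)
    then show ?thesis using len_le by (simp add: sort_key_def)
  next
    case (Proc j)
    then have "Test j \<in> set S" using inv \<open>x \<in> Q\<close> unfolding sort_invariant_def by blast
    then have "t j \<le> sort_key t p y"
      using inv \<open>y \<in> pending Q\<close> unfolding sort_invariant_def by (force simp: sort_key_def)
    then show ?thesis using len_le Proc by (simp add: sort_key_def mval_def)
  qed
qed

lemma sort_invariant_sort_step:
  assumes inv: "sort_invariant J t p Q S" and "Q \<noteq> {}"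
  obtains x where "x \<in> pending Q"
    and "pending (fst (sort_step t p (Q, S))) = pending Q - {x}"
    and "sort_invariant J t p (fst (sort_step t p (Q, S))) (snd (sort_step t p (Q, S)))"
proof -
  define x where "x = arg_min (op_len t p) (\<lambda>x. x \<in> Q)"
  define Q' where "Q' = (Q - {x}) \<union> (case x of Test j \<Rightarrow> {Proc j} | Proc j \<Rightarrow> {})"
  have fin: "finite Q" using inv unfolding sort_invariant_def by blast
  have "x \<in> Q"
    using arg_min_if_finite(1)[OF fin \<open>Q \<noteq> {}\<close>] unfolding x_def arg_min_on_def .
  moreover have "\<forall>y\<in>Q. op_len t p x \<le> op_len t p y"
    using arg_min_least[OF fin \<open>Q \<noteq> {}\<close>] unfolding x_def arg_min_on_def by blast
  ultimately have x_least: "\<forall>y\<in>pending Q. sort_key t p x \<le> sort_key t p y"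
    using sort_key_least_pending[OF inv] by blast
  have step: "sort_step t p (Q, S) = (Q', S @ [x])"
    unfolding sort_step_def Q'_def x_def by (simp add: Let_def)
  have x_pending: "x \<in> pending Q" using \<open>x \<in> Q\<close> unfolding pending_def by blast
  have pending': "pending Q' = pending Q - {x}"
    unfolding Q'_def using pending_sort_step[OF inv \<open>x \<in> Q\<close>] .
  have "sort_invariant J t p Q' (S @ [x])"
    using inv fin x_least x_pending pending'
    unfolding sort_invariant_def Q'_def
    by (cases x) (auto simp: sorted_wrt_append)
  then show ?thesis using that step x_pending pending' by simp
qed

lemma sort_invariant_iterate:
  assumes "finite J" and "s \<le> 2 * card J" and "(sort_step t p ^^ s) (Test ` J, []) = (Q, S)"
  shows "sort_invariant J t p Q S \<and> card (pending Q) = 2 * card J - s"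
  using assms(2,3)
proof (induction s arbitrary: Q S)
  case 0
  have "pending (Test ` J) = Test ` J \<union> Proc ` J" unfolding pending_def by auto
  moreover have "card (Test ` J \<union> Proc ` J) = 2 * card J"
    using \<open>finite J\<close> by (subst card_Un_disjoint) (auto simp: card_image inj_on_def)
  ultimately show ?case
    using 0 \<open>finite J\<close> unfolding sort_invariant_def by auto
next
  case (Suc s)
  obtain Q0 S0 where prev: "(sort_step t p ^^ s) (Test ` J, []) = (Q0, S0)"
    by fastforce
  have inv: "sort_invariant J t p Q0 S0" and card: "card (pending Q0) = 2 * card J - s"
    using Suc prev by auto
  have fin: "finite (pending Q0)"
    using inv \<open>finite J\<close> unfolding sort_invariant_def by (metis finite_Un finite_imageI)
  have "Q0 \<noteq> {}"
    using card Suc.prems(1) unfolding pending_def by auto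
  moreover have "sort_step t p (Q0, S0) = (Q, S)"
    using prev Suc.prems(2) by simp
  ultimately obtain x where "x \<in> pending Q0" and "pending Q = pending Q0 - {x}"
    and "sort_invariant J t p Q S"
    using sort_invariant_sort_step[OF inv] by (metis fst_conv snd_conv)
  with fin card show ?case by (simp add: card_Diff_singleton)
qed

lemma one_sort_sorted:
  assumes "finite J"
  shows "distinct (one_sort J t p)"
    and "sorted_wrt (\<lambda>x y. sort_key t p x \<le> sort_key t p y) (one_sort J t p)"
    and "set (one_sort J t p) = Test ` J \<union> Proc ` J"
proof -
  obtain Q S where final: "(sort_step t p ^^ (2 * card J)) (Test ` J, []) = (Q, S)"
    by fastforce
  have inv: "sort_invariant J t p Q S" and "card (pending Q) = 0"
    using sort_invariant_iterate[OF assms order_refl final] by auto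
  moreover have "finite (pending Q)"
    using inv assms unfolding sort_invariant_def by (metis finite_Un finite_imageI)
  ultimately have "pending Q = {}" by simp
  then show "distinct (one_sort J t p)"
    and "sorted_wrt (\<lambda>x y. sort_key t p x \<le> sort_key t p y) (one_sort J t p)"
    and "set (one_sort J t p) = Test ` J \<union> Proc ` J"
    using inv final unfolding sort_invariant_def one_sort_def by auto
qed

lemma sorted_wrt_takeWhile_neq:
  assumes "sorted_wrt R xs" and "z \<in> set xs" and "y \<in> set (takeWhile (\<lambda>x. x \<noteq> z) xs)"
  shows "R y z"
proof -
  obtain us vs where xs: "xs = us @ z # vs" and "z \<notin> set us"
    using split_list_first[OF assms(2)] by blast
  have "takeWhile (\<lambda>x. x \<noteq> z) xs = us @ takeWhile (\<lambda>x. x \<noteq> z) (z # vs)"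
    unfolding xs using \<open>z \<notin> set us\<close> by (intro takeWhile_append2) blast
  then have "takeWhile (\<lambda>x. x \<noteq> z) xs = us" by simp
  then show ?thesis using assms xs by (auto simp: sorted_wrt_append)
qed

lemma op_job_eq_iff: "op_job x = k \<longleftrightarrow> x = Test k \<or> x = Proc k"
  by (cases x) auto

lemma dd_le_sum:
  assumes "finite J"
    and "set (filter (\<lambda>x. op_job x = k) (takeWhile (\<lambda>x. x \<noteq> Proc j) (one_sort J t p))) \<subseteq> A"
    and "A \<subseteq> {Test k, Proc k}" and "\<forall>x\<in>A. 0 \<le> op_len t p x"
  shows "dd J t p k j \<le> sum (op_len t p) A"
proof -
  let ?xs = "filter (\<lambda>x. op_job x = k) (takeWhile (\<lambda>x. x \<noteq> Proc j) (one_sort J t p))"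
  have "distinct ?xs"
    using one_sort_sorted(1)[OF \<open>finite J\<close>] by (simp add: distinct_takeWhile)
  then have "dd J t p k j = sum (op_len t p) (set ?xs)"
    unfolding dd_def by (simp add: sum_list_distinct_conv_sum_set)
  also have "\<dots> \<le> sum (op_len t p) A"
    using assms(2-4) finite_subset[OF assms(3)] by (intro sum_mono2) auto
  finally show ?thesis .
qed

lemma dd_le_sigma:
  assumes "finite J" and "\<forall>x\<in>J. t x \<ge> 0 \<and> p x \<ge> 0" and "k \<in> J"
  shows "dd J t p k j \<le> sigma t p k"
proof -
  have "dd J t p k j \<le> sum (op_len t p) {Test k, Proc k}"
    using assms by (intro dd_le_sum) (auto simp: op_job_eq_iff)
  then show ?thesis by (simp add: sigma_def)
qed

lemma dd_le_of_mval_less: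
  assumes "finite J" and "\<forall>x\<in>J. t x \<ge> 0 \<and> p x \<ge> 0" and "i \<in> J" and "j \<in> J"
    and "mval t p i < mval t p j" and "t j \<noteq> mval t p i"
  shows "dd J t p j i \<le> (if t j < mval t p i then t j else 0)"
proof -
  define A where "A = (if t j < mval t p i then {Test j} else {})"
  have "set (filter (\<lambda>x. op_job x = j) (takeWhile (\<lambda>x. x \<noteq> Proc i) (one_sort J t p))) \<subseteq> A"
  proof
    fix y
    assume y: "y \<in> set (filter (\<lambda>x. op_job x = j) (takeWhile (\<lambda>x. x \<noteq> Proc i) (one_sort J t p)))"
    have "Proc i \<in> set (one_sort J t p)"
      using one_sort_sorted(3)[OF \<open>finite J\<close>] \<open>i \<in> J\<close> by blast
    then have "sort_key t p y \<le> mval t p i"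
      using y sorted_wrt_takeWhile_neq[OF one_sort_sorted(2)[OF \<open>finite J\<close>]]
      by (force simp: sort_key_def)
    moreover have "y = Test j \<or> y = Proc j" using y by (simp add: op_job_eq_iff)
    ultimately show "y \<in> A"
      using assms(5,6) by (auto simp: sort_key_def A_def)
  qed
  then have "dd J t p j i \<le> sum (op_len t p) A"
    using assms(2,4) by (intro dd_le_sum[OF assms(1)]) (auto simp: A_def)
  then show ?thesis by (simp add: A_def split: if_splits)
qed

lemma DD_le_of_mval_less:
  assumes "finite J" and "\<forall>x\<in>J. t x \<ge> 0 \<and> p x \<ge> 0" and "i \<in> J" and "j \<in> J"
    and "mval t p i < mval t p j" and "t j \<noteq> mval t p i"
  shows "DD J t p i j \<le> sigma t p i + (if t j < mval t p i then t j else 0)"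
  unfolding DD_def by (rule add_mono[OF dd_le_sigma[OF assms(1-3)] dd_le_of_mval_less[OF assms]])

lemma sigma_le_of_imbalanced:
  assumes "imbalanced \<mu> t p i" and "\<mu> > 0"
  shows "sigma t p i \<le> (1 + 1 / \<mu>) * mval t p i"
proof -
  have "min (t i) (p i) \<le> mval t p i / \<mu>"
    using assms unfolding imbalanced_def by (simp add: field_simps)
  moreover have "sigma t p i = mval t p i + min (t i) (p i)"
    unfolding sigma_def mval_def by linarith
  ultimately show ?thesis by (simp add: algebra_simps)
qed

lemma test_le_of_imbalanced:
  assumes "imbalanced \<mu> t p j" and "\<mu> > 0" and "t j < mval t p j"
  shows "t j \<le> mval t p j / \<mu>"
  using assms unfolding imbalanced_def mval_def by (simp add: field_simps max_def min_def split: if_splits)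

lemma sigma_plus_test_le_Dstar:
  assumes "\<mu> > 0" and "\<nu> > 0" and "\<nu> \<le> 1"
    and "0 \<le> t i" and "0 \<le> p i" and "0 \<le> t j" and "0 \<le> p j"
    and imb_i: "imbalanced \<mu> t p i" and imb_j: "imbalanced \<mu> t p j"
    and close: "\<nu> * mval t p j \<le> mval t p i" and less: "mval t p i < mval t p j"
  shows "sigma t p i + (if t j < mval t p i then t j else 0) \<le> (1 + 1 / (\<mu> * \<nu>)) * Dstar t p i j"
proof -
  define c where "c = 1 / (\<mu> * \<nu>)"
  have "c \<ge> 0" using assms(1,2) by (simp add: c_def)
  have "1 / \<mu> \<le> c"
    unfolding c_def using assms(1-3) by (intro divide_left_mono) auto
  moreover have "0 \<le> mval t p i" using assms(4) by (simp add: mval_def)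
  ultimately have "(1 + 1 / \<mu>) * mval t p i \<le> (1 + c) * mval t p i"
    by (intro mult_right_mono) auto
  with sigma_le_of_imbalanced[OF imb_i \<open>\<mu> > 0\<close>]
  have sigma_i: "sigma t p i \<le> (1 + c) * mval t p i" by linarith
  have mval_le_sigma: "mval t p i \<le> sigma t p i"
    using assms(4,5) by (auto simp: mval_def sigma_def)
  show ?thesis
  proof (cases "t j < mval t p i")
    case False
    then have "mval t p i \<le> sigma t p j" using assms(7) by (simp add: sigma_def)
    then have "sigma t p i \<le> (1 + c) * sigma t p j"
      using sigma_i \<open>c \<ge> 0\<close> by (smt (verit) mult_left_mono)
    moreover have "sigma t p i \<le> (1 + c) * sigma t p i"
      using \<open>c \<ge> 0\<close> assms(4,5) by (simp add: sigma_def algebra_simps)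
    ultimately show ?thesis using False by (simp add: Dstar_def c_def)
  next
    case True
    then have p_j: "mval t p j = p j" using less by (simp add: mval_def max_def split: if_splits)
    have "t j \<le> mval t p j / \<mu>"
      using test_le_of_imbalanced[OF imb_j \<open>\<mu> > 0\<close>] True less by simp
    also have "\<dots> \<le> c * mval t p i"
      using close assms(1,2) by (simp add: c_def field_simps)
    also have "\<dots> \<le> c * sigma t p i"
      using mval_le_sigma \<open>c \<ge> 0\<close> by (rule mult_left_mono)
    finally have "sigma t p i + t j \<le> (1 + c) * sigma t p i" by (simp add: algebra_simps)
    moreover have "sigma t p i + t j \<le> (1 + c) * sigma t p j"
    proof -
      have "(1 + c) * mval t p i \<le> (1 + c) * p j"
        using less p_j \<open>c \<ge> 0\<close> by (intro mult_left_mono) auto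
      moreover have "t j \<le> (1 + c) * t j" using \<open>c \<ge> 0\<close> assms(6) by (simp add: algebra_simps)
      ultimately show ?thesis using sigma_i by (simp add: sigma_def algebra_simps)
    qed
    ultimately show ?thesis using True by (simp add: Dstar_def c_def)
  qed
qed

lemma general_position_neq:
  assumes "general_position J t p" and "a \<in> J" and "b \<in> J" and "a \<noteq> b"
  shows "t a \<noteq> t b" and "t a \<noteq> p b" and "p a \<noteq> p b"
proof -
  let ?f = "\<lambda>(c::nat, j). if c = 0 then t j else if c = 1 then p j else sigma t p j"
  have inj: "inj_on ?f ({0, 1, 2} \<times> J)"
    using assms(1) unfolding general_position_def .
  show "t a \<noteq> t b" using inj_onD[OF inj, of "(0, a)" "(0, b)"] assms(2-4) by auto
  show "t a \<noteq> p b" using inj_onD[OF inj, of "(0, a)" "(1, b)"] assms(2-4) by auto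
  show "p a \<noteq> p b" using inj_onD[OF inj, of "(1, a)" "(1, b)"] assms(2-4) by auto
qed

lemma general_position_mval_neq:
  assumes "general_position J t p" and "a \<in> J" and "b \<in> J" and "a \<noteq> b"
  shows "mval t p a \<noteq> mval t p b" and "t a \<noteq> mval t p b"
  using general_position_neq[OF assms] general_position_neq[OF assms(1,3,2)] assms(4)
  unfolding mval_def by (auto simp: max_def)

lemma DD_le_of_imbalanced:
  assumes "finite J" and "\<forall>x\<in>J. t x \<ge> 0 \<and> p x \<ge> 0" and "i \<in> J" and "j \<in> J"
    and "\<mu> > 0" and "\<nu> > 0" and "\<nu> \<le> 1"
    and "imbalanced \<mu> t p i" and "imbalanced \<mu> t p j"
    and "\<nu> * mval t p j \<le> mval t p i" and "mval t p i < mval t p j" and "t j \<noteq> mval t p i"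
  shows "DD J t p i j \<le> (1 + 1 / (\<mu> * \<nu>)) * Dstar t p i j"
proof -
  have "DD J t p i j \<le> sigma t p i + (if t j < mval t p i then t j else 0)"
    by (rule DD_le_of_mval_less[OF assms(1-4,11,12)])
  also have "\<dots> \<le> (1 + 1 / (\<mu> * \<nu>)) * Dstar t p i j"
    using assms(2-4) by (intro sigma_plus_test_le_Dstar[OF assms(5-7) _ _ _ _ assms(8-11)]) auto
  finally show ?thesis .
qed

lemma DD_commute: "DD J t p i j = DD J t p j i"
  unfolding DD_def by simp

lemma Dstar_commute: "Dstar t p i j = Dstar t p j i"
  unfolding Dstar_def by simp

theorem mainTheorem8:
  fixes J :: "'a set" and t p :: "'a \<Rightarrow> real" and \<mu> \<nu> :: real and i j k :: 'a
  assumes "finite J"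
    and "\<forall>x\<in>J. t x \<ge> 0 \<and> p x \<ge> 0"
    and "general_position J t p"
    and "\<mu> > 1" and "0 < \<nu>" and "\<nu> < 1" and "\<mu> * \<nu> > 1"
    and "1 + 1 / \<mu> \<le> \<nu> + \<nu>^2"
    and "i \<in> J" and "j \<in> J" and "k \<in> J"
    and "i \<noteq> j" and "i \<noteq> k" and "j \<noteq> k"
    and "red_pair \<mu> \<nu> t p i k" and "red_pair \<mu> \<nu> t p j k"
  shows "Dstar t p i j \<ge> t k \<and> DD J t p i j \<le> (1 + 1 / (\<mu> * \<nu>)) * Dstar t p i j"
proof
  have red_i: "imbalanced \<mu> t p i" "t k \<le> mval t p i" "\<nu> * mval t p i \<le> t k"
    and red_j: "imbalanced \<mu> t p j" "t k \<le> mval t p j" "\<nu> * mval t p j \<le> t k"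
    using assms(15,16) unfolding red_pair_def by auto
  have "mval t p i \<le> sigma t p i" and "mval t p j \<le> sigma t p j"
    using assms(2,9,10) unfolding sigma_def mval_def by auto
  then show "Dstar t p i j \<ge> t k" using red_i red_j unfolding Dstar_def by simp
  have "\<mu> > 0" using \<open>\<mu> > 1\<close> by simp
  note bound = DD_le_of_imbalanced[OF assms(1,2) _ _ \<open>\<mu> > 0\<close> \<open>0 < \<nu>\<close> less_imp_le[OF \<open>\<nu> < 1\<close>]]
  have close: "\<nu> * mval t p j \<le> mval t p i" "\<nu> * mval t p i \<le> mval t p j"
    using red_i red_j by linarith+
  have test_neq: "t j \<noteq> mval t p i" "t i \<noteq> mval t p j"
    using general_position_mval_neq(2) assms(3,9,10,12) by metis+
  consider "mval t p i < mval t p j" | "mval t p j < mval t p i"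
    using general_position_mval_neq(1)[OF assms(3,9,10,12)] by fastforce
  then show "DD J t p i j \<le> (1 + 1 / (\<mu> * \<nu>)) * Dstar t p i j"
  proof cases
    case 1
    then show ?thesis by (rule bound[OF assms(9,10) red_i(1) red_j(1) close(1) _ test_neq(1)])
  next
    case 2
    then have "DD J t p j i \<le> (1 + 1 / (\<mu> * \<nu>)) * Dstar t p j i"
      by (rule bound[OF assms(10,9) red_j(1) red_i(1) close(2) _ test_neq(2)])
    then show ?thesis by (simp add: DD_commute Dstar_commute)
  qed
qed

end
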